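(* Suppose $N>3$ and let $c_\star$ be any real number with $\frac{n_1\vee n_2}{N-3}\le c_\star$. Then $$\sum_{\alpha\in\Gamma_1}\mathbb E\Big[I_\alpha\sum_{\beta\in\Gamma_1}|I_\beta-J_{\beta\alpha}|\sum_{\gamma\in\Gamma_1}|I_\gamma-J_{\gamma\alpha}|\Big]\le(8c_\star+36c_\star^2)(n_1\vee n_2).$$
   Context: Degree sequence $(d_1,\dots,d_n)$, $N=\sum d_i$ even, $n_k=|\{i:d_i=k\}|$, half-edges $1..N$ with $d_i$ belonging to vertex $v_i$; $\mathfrak g$ a uniform random perfect matching. $\Gamma_{11}$ = sets $\{\{s,t\}\}$, $s\in v_i,t\in v_j$, $i<j$, $d_i=d_j=1$; $\Gamma_{12}$ = sets $\{\{s,u\},\{t,v\}\}$, $s\in v_i,t\in v_j$, $i<j$, $d_i=d_j=1$, $u\ne v\in v_k$, $d_k=2$; $\Gamma_1=\Gamma_{11}\cup\Gamma_{12}$. $I_\alpha=1$ iff all pairs of $\alpha$ lie in $\mathfrak g$. Switching coupling: for $\alpha$ with pairs $\{s_{\ell,1},s_{\ell,2}\}$, $\ell=1..e$, ordered by increasing $s_{\ell,1}\wedge s_{\ell,2}$, independent $B_{\alpha,\ell}$ uniform on $\{1..N-2(e-\ell)-1\}$ (independent of each other over all $\alpha,\ell$ and of $\mathfrak g$); if $I_\alpha=0$ then $\mathfrak g_\alpha=\mathfrak g$; if $I_\alpha=1$, starting from $g_0=\mathfrak g$, for $\ell=1..e$ let $t_{\ell,1}$ be the $B_{\alpha,\ell}$-th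 smallest element of $\{1..N\}\setminus(\{s_{\ell,1}\wedge s_{\ell,2}\}\cup\bigcup_{m>\ell}\{s_{m,1},s_{m,2}\})$, $t_{\ell,2}$ its partner in $g_{\ell-1}$, and replace in $g_{\ell-1}$ the pairs $\{s_{\ell,1},s_{\ell,2}\},\{t_{\ell,1},t_{\ell,2}\}$ by $\{s_{\ell,1}\wedge s_{\ell,2},t_{\ell,1}\},\{s_{\ell,1}\vee s_{\ell,2},t_{\ell,2}\}$ (no change if $t_{\ell,1}=s_{\ell,1}\vee s_{\ell,2}$) to get $g_\ell$; $\mathfrak g_\alpha=g_e$. $J_{\beta\alpha}=1$ iff all pairs of $\beta$ lie in $\mathfrak g_\alpha$. *)

theory Defs
  imports "HOL-Probability.Probability"
begin

(* Degree sequence d 1, ..., d n (vertices indexed 1..n).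
   Half-edges are 1..N, N = d 1 + ... + d n; vertex v_i owns the
   consecutive block of d i half-edges {D(i-1)+1 .. D i}. *)
definition dsum :: "(nat \<Rightarrow> nat) \<Rightarrow> nat \<Rightarrow> nat" where
  "dsum d i = (\<Sum>j=1..i. d j)"

definition half_edges :: "(nat \<Rightarrow> nat) \<Rightarrow> nat \<Rightarrow> nat set" where
  "half_edges d i = {dsum d (i - 1) + 1 .. dsum d i}"

definition cnt :: "nat \<Rightarrow> (nat \<Rightarrow> nat) \<Rightarrow> nat \<Rightarrow> nat" where
  "cnt n d k = card {i \<in> {1..n}. d i = k}"

definition edge :: "nat \<Rightarrow> nat \<Rightarrow> nat \<times> nat" where
  "edge a b = (min a b, max a b)"

definition perfect_matchings :: "nat \<Rightarrow> (nat \<times> nat) set set" where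
  "perfect_matchings N = {g. (\<forall>(a,b)\<in>g. a < b \<and> a \<in> {1..N} \<and> b \<in> {1..N}) \<and>
       (\<forall>x\<in>{1..N}. \<exists>!p. p \<in> g \<and> (x = fst p \<or> x = snd p))}"

definition partner :: "(nat \<times> nat) set \<Rightarrow> nat \<Rightarrow> nat" where
  "partner g x = (THE y. (x, y) \<in> g \<or> (y, x) \<in> g)"

definition Gamma11 :: "nat \<Rightarrow> (nat \<Rightarrow> nat) \<Rightarrow> (nat \<times> nat) set set" where
  "Gamma11 n d = {{edge s t} | s t i j. i \<in> {1..n} \<and> j \<in> {1..n} \<and> i < j \<and>
       d i = 1 \<and> d j = 1 \<and> s \<in> half_edges d i \<and> t \<in> half_edges d j}"

definition Gamma12 :: "nat \<Rightarrow> (nat \<Rightarrow> nat) \<Rightarrow> (nat \<times> nat) set set" where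
  "Gamma12 n d = {{edge s u, edge t v} | s t u v i j k. i \<in> {1..n} \<and> j \<in> {1..n} \<and>
       k \<in> {1..n} \<and> i < j \<and> d i = 1 \<and> d j = 1 \<and> d k = 2 \<and>
       s \<in> half_edges d i \<and> t \<in> half_edges d j \<and>
       u \<in> half_edges d k \<and> v \<in> half_edges d k \<and> u \<noteq> v}"

definition Gamma1 :: "nat \<Rightarrow> (nat \<Rightarrow> nat) \<Rightarrow> (nat \<times> nat) set set" where
  "Gamma1 n d = Gamma11 n d \<union> Gamma12 n d"

definition Ind :: "(nat \<times> nat) set \<Rightarrow> (nat \<times> nat) set \<Rightarrow> real" where
  "Ind alpha g = (if alpha \<subseteq> g then 1 else 0)"

(* one switching step: pair (a,b), a<b, excluded set (later pairs), value B *)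
definition switch_step :: "nat \<Rightarrow> (nat \<times> nat) set \<Rightarrow> nat \<times> nat \<Rightarrow> nat set \<Rightarrow> nat
    \<Rightarrow> (nat \<times> nat) set" where
  "switch_step N g p excl B =
     (let a = fst p; b = snd p;
          t1 = sorted_list_of_set ({1..N} - ({a} \<union> excl)) ! (B - 1);
          t2 = partner g t1
      in if t1 = b then g
         else (g - {edge a b, edge t1 t2}) \<union> {edge a t1, edge b t2})"

(* pairs of alpha ordered by increasing smaller endpoint: ps ! (l-1) is pair number l *)
definition pairs_list :: "(nat \<times> nat) set \<Rightarrow> (nat \<times> nat) list" where
  "pairs_list alpha = map (\<lambda>a. THE p. p \<in> alpha \<and> fst p = a) (sorted_list_of_set (fst ` alpha))"

primrec switch_iter :: "nat \<Rightarrow> (nat \<times> nat) list \<Rightarrow> (nat \<Rightarrow> nat) \<Rightarrow> (nat \<times> nat) set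
    \<Rightarrow> nat \<Rightarrow> (nat \<times> nat) set" where
  "switch_iter N ps Bs g 0 = g"
| "switch_iter N ps Bs g (Suc k) =
     switch_step N (switch_iter N ps Bs g k) (ps ! k)
       (\<Union>q\<in>set (drop (Suc k) ps). {fst q, snd q}) (Bs (Suc k))"

definition switched :: "nat \<Rightarrow> (nat \<times> nat) set \<Rightarrow> (nat \<Rightarrow> nat) \<Rightarrow> (nat \<times> nat) set
    \<Rightarrow> (nat \<times> nat) set" where
  "switched N alpha Bs g =
     (if alpha \<subseteq> g then switch_iter N (pairs_list alpha) Bs g (card alpha) else g)"

definition Jind :: "nat \<Rightarrow> (nat \<times> nat) set \<Rightarrow> (nat \<times> nat) set \<Rightarrow> (nat \<Rightarrow> nat)
    \<Rightarrow> (nat \<times> nat) set \<Rightarrow> real" where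
  "Jind N beta alpha Bs g = (if beta \<subseteq> switched N alpha Bs g then 1 else 0)"

definition B_law :: "nat \<Rightarrow> (nat \<times> nat) set \<Rightarrow> (nat \<Rightarrow> nat) pmf" where
  "B_law N alpha = Pi_pmf {1..card alpha} 0
      (\<lambda>l. pmf_of_set {1..N - 2 * (card alpha - l) - 1})"

definition coupling_law :: "nat \<Rightarrow> (nat \<Rightarrow> nat) \<Rightarrow> nat
    \<Rightarrow> ((nat \<times> nat) set \<times> ((nat \<times> nat) set \<Rightarrow> nat \<Rightarrow> nat)) pmf" where
  "coupling_law N d n = pair_pmf (pmf_of_set (perfect_matchings N))
      (Pi_pmf (Gamma1 n d) (\<lambda>_. 0) (\<lambda>alpha. B_law N alpha))"

end

theory Submission
  imports Defs "HOL-Combinatorics.Transposition"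
begin

text \<open>
  Switching at \<alpha> changes the matching only next to \<alpha>: every step deletes a pair of \<alpha> and
  the pair through the chosen target half-edge, and creates two pairs through endpoints of \<alpha>.
  Two members of \<open>\<Gamma>\<^sub>1\<close> lying in one perfect matching and sharing a half-edge are equal, so at
  most \<open>1 + |\<alpha>|\<close> members of \<open>\<Gamma>\<^sub>1\<close> disappear and at most 2 (for \<open>\<alpha> \<in> \<Gamma>\<^sub>1\<^sub>1\<close>) or 3 (for
  \<open>\<alpha> \<in> \<Gamma>\<^sub>1\<^sub>2\<close>, whose degree-2 vertex counts once) appear. Hence the \<alpha>-term is at most
  \<open>16 P(\<alpha> \<subseteq> g)\<close> resp. \<open>36 P(\<alpha> \<subseteq> g)\<close>. Relabelling matchings by transpositions shows that the
  partner of a free half-edge is uniform among the free half-edges, so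
  \<open>P(\<alpha> \<subseteq> g)\<close> is at most \<open>1/(N-1)\<close> resp. \<open>1/((N-1)(N-3))\<close>; finally
  \<open>|\<Gamma>\<^sub>1\<^sub>1| \<le> n\<^sub>1\<^sup>2/2\<close> and \<open>|\<Gamma>\<^sub>1\<^sub>2| \<le> n\<^sub>1\<^sup>2 n\<^sub>2\<close>.
\<close>

lemma dsum_Suc: "dsum d (Suc i) = dsum d i + d (Suc i)"
  by (simp add: dsum_def)

lemma dsum_mono: "i \<le> j \<Longrightarrow> dsum d i \<le> dsum d j"
  unfolding dsum_def by (intro sum_mono2) auto

lemma dsum_eq_pred: "i \<ge> 1 \<Longrightarrow> dsum d i = dsum d (i - 1) + d i"
  by (cases i) (auto simp: dsum_Suc)

lemma half_edges_unique_vertex: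
  assumes "x \<in> half_edges d i" "x \<in> half_edges d j"
  shows "i = j"
proof -
  have False if "x \<in> half_edges d i" "x \<in> half_edges d j" "i < j" for i j
  proof -
    have "dsum d i \<le> dsum d (j - 1)" using \<open>i < j\<close> by (intro dsum_mono) simp
    then show False using that(1,2) by (auto simp: half_edges_def)
  qed
  with assms show ?thesis by (metis linorder_neqE_nat)
qed

lemma half_edges_subset: "i \<le> n \<Longrightarrow> half_edges d i \<subseteq> {1..dsum d n}"
  using dsum_mono[of i n d] by (auto simp: half_edges_def)

lemma card_half_edges: "i \<ge> 1 \<Longrightarrow> card (half_edges d i) = d i"
  using dsum_eq_pred[of i d] by (simp add: half_edges_def)

lemma half_edges_degree_1: "i \<ge> 1 \<Longrightarrow> d i = 1 \<Longrightarrow> half_edges d i = {dsum d i}"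
  using dsum_eq_pred[of i d] by (auto simp: half_edges_def)

lemma half_edges_degree_2: "i \<ge> 1 \<Longrightarrow> d i = 2 \<Longrightarrow> half_edges d i = {dsum d i - 1, dsum d i}"
  using dsum_eq_pred[of i d] by (auto simp: half_edges_def)

definition endpoints :: "nat \<times> nat \<Rightarrow> nat set" where
  "endpoints p = {fst p, snd p}"

definition support :: "(nat \<times> nat) set \<Rightarrow> nat set" where
  "support F = \<Union> (endpoints ` F)"

lemma endpoints_edge [simp]: "endpoints (edge a b) = {a, b}"
  by (auto simp: endpoints_def edge_def min_def max_def)

lemma support_insert [simp]: "support (insert p F) = endpoints p \<union> support F"
  by (simp add: support_def)

lemma support_empty [simp]: "support {} = {}"
  by (simp add: support_def)

lemma edge_ordered: "a < b \<Longrightarrow> edge a b = (a, b)"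
  by (simp add: edge_def)

lemma edge_map_edge: "edge (f (fst (edge u v))) (f (snd (edge u v))) = edge (f u) (f v)"
  by (cases "u \<le> v") (auto simp: edge_def min_def max_def)

lemma edge_in_range:
  "a \<noteq> b \<Longrightarrow> a \<in> A \<Longrightarrow> b \<in> A \<Longrightarrow> fst (edge a b) < snd (edge a b) \<and> fst (edge a b) \<in> A \<and> snd (edge a b) \<in> A"
  by (auto simp: edge_def min_def max_def)

lemma card_support_le: "finite F \<Longrightarrow> card (support F) \<le> 2 * card F"
proof -
  assume "finite F"
  then have "card (support F) \<le> (\<Sum>p\<in>F. card (endpoints p))"
    unfolding support_def by (rule card_UN_le)
  also have "\<dots> \<le> (\<Sum>p\<in>F. 2)"
    by (intro sum_mono) (simp add: endpoints_def card_insert_le_m1)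
  finally show ?thesis by simp
qed

lemma perfect_matchings_iff: "g \<in> perfect_matchings N \<longleftrightarrow>
    (\<forall>p\<in>g. fst p < snd p \<and> fst p \<in> {1..N} \<and> snd p \<in> {1..N}) \<and>
    (\<forall>x\<in>{1..N}. \<exists>p\<in>g. x \<in> endpoints p) \<and>
    (\<forall>p\<in>g. \<forall>q\<in>g. endpoints p \<inter> endpoints q \<noteq> {} \<longrightarrow> p = q)" (is "_ \<longleftrightarrow> ?R")
proof
  assume g: "g \<in> perfect_matchings N"
  have pairs: "\<forall>p\<in>g. fst p < snd p \<and> fst p \<in> {1..N} \<and> snd p \<in> {1..N}"
    using g by (auto simp: perfect_matchings_def)
  moreover have "\<forall>x\<in>{1..N}. \<exists>p\<in>g. x \<in> endpoints p"
    using g unfolding perfect_matchings_def endpoints_def by blast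
  moreover have "\<forall>p\<in>g. \<forall>q\<in>g. endpoints p \<inter> endpoints q \<noteq> {} \<longrightarrow> p = q"
  proof (intro ballI impI)
    fix p q assume pq: "p \<in> g" "q \<in> g" "endpoints p \<inter> endpoints q \<noteq> {}"
    then obtain x where x: "x \<in> endpoints p" "x \<in> endpoints q" by blast
    have "x \<in> {1..N}" using pairs pq(1) x(1) by (auto simp: endpoints_def)
    then have "\<exists>!p. p \<in> g \<and> (x = fst p \<or> x = snd p)" using g by (auto simp: perfect_matchings_def)
    then show "p = q" using x pq by (auto simp: endpoints_def)
  qed
  ultimately show ?R by blast
next
  assume R: ?R
  show "g \<in> perfect_matchings N"
    unfolding perfect_matchings_def mem_Collect_eq
  proof (intro conjI ballI)
    fix p assume "p \<in> g"
    then show "case p of (a, b) \<Rightarrow> a < b \<and> a \<in> {1..N} \<and> b \<in> {1..N}"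
      using R by (auto split: prod.splits)
  next
    fix x :: nat assume "x \<in> {1..N}"
    then obtain p where p: "p \<in> g" "x \<in> endpoints p" using R by blast
    show "\<exists>!p. p \<in> g \<and> (x = fst p \<or> x = snd p)"
    proof (rule ex1I[of _ p])
      show "p \<in> g \<and> (x = fst p \<or> x = snd p)" using p by (auto simp: endpoints_def)
      show "q = p" if "q \<in> g \<and> (x = fst q \<or> x = snd q)" for q
        using that R p by (auto simp: endpoints_def)
    qed
  qed
qed

lemma perfect_matchingsI:
  assumes "\<And>p. p \<in> g \<Longrightarrow> fst p < snd p \<and> fst p \<in> {1..N} \<and> snd p \<in> {1..N}"
    and "\<And>x. x \<in> {1..N} \<Longrightarrow> \<exists>p\<in>g. x \<in> endpoints p"
    and "\<And>p q. p \<in> g \<Longrightarrow> q \<in> g \<Longrightarrow> endpoints p \<inter> endpoints q \<noteq> {} \<Longrightarrow> p = q"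
  shows "g \<in> perfect_matchings N"
  using assms unfolding perfect_matchings_iff by blast

lemma perfect_matchingD:
  "g \<in> perfect_matchings N \<Longrightarrow> p \<in> g \<Longrightarrow> fst p < snd p \<and> fst p \<in> {1..N} \<and> snd p \<in> {1..N}"
  by (auto simp: perfect_matchings_iff)

lemma perfect_matching_covers:
  "g \<in> perfect_matchings N \<Longrightarrow> x \<in> {1..N} \<Longrightarrow> \<exists>p\<in>g. x \<in> endpoints p"
  by (auto simp: perfect_matchings_iff)

lemma perfect_matching_pair_eqI:
  "g \<in> perfect_matchings N \<Longrightarrow> p \<in> g \<Longrightarrow> q \<in> g \<Longrightarrow> x \<in> endpoints p \<Longrightarrow> x \<in> endpoints q \<Longrightarrow> p = q"
  unfolding perfect_matchings_iff by blast

lemma perfect_matchings_subset: "perfect_matchings N \<subseteq> Pow ({1..N} \<times> {1..N})"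
  by (auto simp: perfect_matchings_def)

lemma finite_perfect_matchings: "finite (perfect_matchings N)"
  using perfect_matchings_subset by (rule finite_subset) auto

lemma perfect_matching_finite: "g \<in> perfect_matchings N \<Longrightarrow> finite g"
  using perfect_matchings_subset[of N] finite_subset[of g "{1..N} \<times> {1..N}"] by blast

lemma perfect_matchings_nonempty:
  assumes "even N"
  shows "perfect_matchings N \<noteq> {}"
proof -
  define g where "g = (\<lambda>i. (2 * i + 1, 2 * i + 2)) ` {..<N div 2}"
  have "g \<in> perfect_matchings N" unfolding perfect_matchings_iff
  proof (intro conjI)
    show "\<forall>p\<in>g. fst p < snd p \<and> fst p \<in> {1..N} \<and> snd p \<in> {1..N}"
      using assms by (auto simp: g_def elim!: evenE)
    show "\<forall>x\<in>{1..N}. \<exists>p\<in>g. x \<in> endpoints p"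
    proof
      fix x assume x: "x \<in> {1..N}"
      define i where "i = (x - 1) div 2"
      have "i < N div 2" using x assms unfolding i_def by (auto elim!: evenE)
      moreover have "x = 2 * i + 1 \<or> x = 2 * i + 2" using x unfolding i_def by auto
      ultimately show "\<exists>p\<in>g. x \<in> endpoints p" unfolding g_def endpoints_def by auto
    qed
    show "\<forall>p\<in>g. \<forall>q\<in>g. endpoints p \<inter> endpoints q \<noteq> {} \<longrightarrow> p = q"
      unfolding g_def endpoints_def by auto presburger+
  qed
  then show ?thesis by blast
qed

lemma partner_edge:
  assumes g: "g \<in> perfect_matchings N" and p: "p \<in> g" and x: "x \<in> endpoints p"
  shows "edge x (partner g x) = p"
proof -
  have p_eq: "edge x y = p" if "(x, y) \<in> g \<or> (y, x) \<in> g" for y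
  proof -
    from that obtain r where r: "r \<in> g" "r = (x, y) \<or> r = (y, x)" by blast
    then have "r = p" using perfect_matching_pair_eqI[OF g r(1) p _ x] by (auto simp: endpoints_def)
    then show ?thesis using r perfect_matchingD[OF g p] by (auto simp: edge_def)
  qed
  have "\<exists>!y. (x, y) \<in> g \<or> (y, x) \<in> g"
  proof (rule ex_ex1I)
    show "\<exists>y. (x, y) \<in> g \<or> (y, x) \<in> g"
      using x p by (cases p) (auto simp: endpoints_def)
    show "y = y'" if "(x, y) \<in> g \<or> (y, x) \<in> g" "(x, y') \<in> g \<or> (y', x) \<in> g" for y y'
      using p_eq[OF that(1)] p_eq[OF that(2)] by (auto simp: edge_def min_def max_def split: if_splits)
  qed
  then have "(x, partner g x) \<in> g \<or> (partner g x, x) \<in> g"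
    unfolding partner_def by (rule theI')
  then show ?thesis by (rule p_eq)
qed

section \<open>Relabelling matchings\<close>

definition relabel :: "(nat \<Rightarrow> nat) \<Rightarrow> (nat \<times> nat) set \<Rightarrow> (nat \<times> nat) set" where
  "relabel \<pi> g = (\<lambda>p. edge (\<pi> (fst p)) (\<pi> (snd p))) ` g"

lemma endpoints_relabel: "endpoints (edge (\<pi> (fst p)) (\<pi> (snd p))) = \<pi> ` endpoints p"
  unfolding endpoints_edge by (simp add: endpoints_def)

lemma relabel_relabel: "relabel \<pi> (relabel \<sigma> g) = relabel (\<pi> \<circ> \<sigma>) g"
  unfolding relabel_def image_image by (simp add: edge_map_edge)

lemma relabel_id: "\<forall>p\<in>g. fst p < snd p \<Longrightarrow> relabel id g = g"
  unfolding relabel_def by (simp add: edge_ordered)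

lemma perfect_matching_relabel:
  assumes g: "g \<in> perfect_matchings N" and \<pi>: "bij_betw \<pi> {1..N} {1..N}"
  shows "relabel \<pi> g \<in> perfect_matchings N"
proof -
  have inj: "inj_on \<pi> {1..N}" and range: "\<pi> ` {1..N} = {1..N}"
    using \<pi> by (auto simp: bij_betw_def)
  have ends: "endpoints p \<subseteq> {1..N}" if "p \<in> g" for p
    using perfect_matchingD[OF g that] by (auto simp: endpoints_def)
  show ?thesis
  proof (rule perfect_matchingsI)
    fix r assume "r \<in> relabel \<pi> g"
    then obtain p where p: "p \<in> g" and r: "r = edge (\<pi> (fst p)) (\<pi> (snd p))"
      by (auto simp: relabel_def)
    have "\<pi> (fst p) \<noteq> \<pi> (snd p)" "\<pi> (fst p) \<in> {1..N}" "\<pi> (snd p) \<in> {1..N}"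
      using perfect_matchingD[OF g p] inj range by (auto dest: inj_onD)
    then show "fst r < snd r \<and> fst r \<in> {1..N} \<and> snd r \<in> {1..N}"
      unfolding r by (rule edge_in_range)
  next
    fix x assume "x \<in> {1..N}"
    then obtain y where "y \<in> {1..N}" "x = \<pi> y" using range by blast
    then obtain p where "p \<in> g" "x \<in> \<pi> ` endpoints p" using perfect_matching_covers[OF g] by blast
    then show "\<exists>r\<in>relabel \<pi> g. x \<in> endpoints r"
      unfolding relabel_def by (metis endpoints_relabel image_eqI)
  next
    fix r s assume "r \<in> relabel \<pi> g" "s \<in> relabel \<pi> g" "endpoints r \<inter> endpoints s \<noteq> {}"
    then obtain p q where pq: "p \<in> g" "q \<in> g" "r = edge (\<pi> (fst p)) (\<pi> (snd p))"
        "s = edge (\<pi> (fst q)) (\<pi> (snd q))"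
      by (auto simp: relabel_def)
    with \<open>endpoints r \<inter> endpoints s \<noteq> {}\<close> have "\<pi> ` endpoints p \<inter> \<pi> ` endpoints q \<noteq> {}"
      by (metis endpoints_relabel)
    then obtain x y where xy: "x \<in> endpoints p" "y \<in> endpoints q" "\<pi> x = \<pi> y" by blast
    then have "x = y" using ends[OF pq(1)] ends[OF pq(2)] inj by (meson inj_onD subsetD)
    with xy have "endpoints p \<inter> endpoints q \<noteq> {}" by blast
    then show "r = s" using perfect_matching_pair_eqI[OF g pq(1,2)] pq(3,4) by blast
  qed
qed

lemma edge_eq_iff: "edge x y = edge u v \<longleftrightarrow> {x, y} = {u, v}"
  by (auto simp: edge_def doubleton_eq_iff min_def max_def)

lemma perfect_matching_exchange:
  assumes g: "g \<in> perfect_matchings N" and p: "p \<in> g" and q: "q \<in> g" and "p \<noteq> q"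
    and p_ends: "endpoints p = {a, b}" and q_ends: "endpoints q = {c, e}"
  shows "(g - {p, q}) \<union> {edge a c, edge b e} \<in> perfect_matchings N"
proof -
  define \<tau> where "\<tau> = Transposition.transpose b c"
  have disj: "endpoints p \<inter> endpoints q = {}"
    using perfect_matching_pair_eqI[OF g p q] \<open>p \<noteq> q\<close> by blast
  have "endpoints p \<subseteq> {1..N}" "endpoints q \<subseteq> {1..N}"
    using perfect_matchingD[OF g p] perfect_matchingD[OF g q] by (auto simp: endpoints_def)
  then have "b \<in> {1..N}" "c \<in> {1..N}" using p_ends q_ends by auto
  then have "relabel \<tau> g \<in> perfect_matchings N"
    by (intro perfect_matching_relabel[OF g]) (simp add: \<tau>_def)
  have fixed: "edge (\<tau> (fst r)) (\<tau> (snd r)) = r" if "r \<in> g - {p, q}" for r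
  proof -
    have "b \<notin> endpoints r" "c \<notin> endpoints r"
      using perfect_matching_pair_eqI[OF g, of r p b] perfect_matching_pair_eqI[OF g, of r q c]
        that p q p_ends q_ends by auto
    then show ?thesis
      using perfect_matchingD[OF g, of r] that by (simp add: \<tau>_def endpoints_def edge_ordered)
  qed
  have swapped: "edge (\<tau> (fst p)) (\<tau> (snd p)) = edge a c" "edge (\<tau> (fst q)) (\<tau> (snd q)) = edge b e"
    using disj p_ends q_ends perfect_matchingD[OF g p] perfect_matchingD[OF g q] unfolding edge_eq_iff
    by (auto simp: \<tau>_def endpoints_def Transposition.transpose_def doubleton_eq_iff)
  have "relabel \<tau> g = (\<lambda>r. edge (\<tau> (fst r)) (\<tau> (snd r))) ` (g - {p, q})
      \<union> {edge (\<tau> (fst p)) (\<tau> (snd p)), edge (\<tau> (fst q)) (\<tau> (snd q))}"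
    unfolding relabel_def using p q by blast
  also have "\<dots> = (g - {p, q}) \<union> {edge a c, edge b e}"
    unfolding swapped using fixed by force
  finally show ?thesis using \<open>relabel \<tau> g \<in> perfect_matchings N\<close> by simp
qed

lemma relabel_memI: "p \<in> g \<Longrightarrow> edge (\<pi> (fst p)) (\<pi> (snd p)) \<in> relabel \<pi> g"
  by (auto simp: relabel_def)

lemma relabel_transpose_involutory:
  "g \<in> perfect_matchings N \<Longrightarrow> relabel (Transposition.transpose x y) (relabel (Transposition.transpose x y) g) = g"
  by (simp add: relabel_relabel relabel_id perfect_matchingD)

lemma card_matchings_edge_le:
  assumes xy: "x \<in> {1..N}" "y \<in> {1..N}" and a: "a \<noteq> x" "a \<noteq> y"
    and F: "\<forall>q\<in>F. fst q < snd q \<and> x \<notin> endpoints q \<and> y \<notin> endpoints q"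
  shows "card {g \<in> perfect_matchings N. F \<subseteq> g \<and> edge a x \<in> g}
       \<le> card {g \<in> perfect_matchings N. F \<subseteq> g \<and> edge a y \<in> g}"
proof -
  define \<tau> where "\<tau> = Transposition.transpose x y"
  have "relabel \<tau> g \<in> {g \<in> perfect_matchings N. F \<subseteq> g \<and> edge a y \<in> g}"
    if g: "g \<in> perfect_matchings N" "F \<subseteq> g" "edge a x \<in> g" for g
  proof (intro CollectI conjI subsetI)
    show "relabel \<tau> g \<in> perfect_matchings N"
      using xy by (intro perfect_matching_relabel[OF g(1)]) (simp add: \<tau>_def)
    have "edge (\<tau> a) (\<tau> x) \<in> relabel \<tau> g"
      using relabel_memI[OF g(3)] by (simp only: edge_map_edge)
    then show "edge a y \<in> relabel \<tau> g" using a by (simp add: \<tau>_def)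
    fix q assume q: "q \<in> F"
    then have "edge (\<tau> (fst q)) (\<tau> (snd q)) = q"
      using F by (auto simp: \<tau>_def endpoints_def edge_ordered)
    then show "q \<in> relabel \<tau> g" using relabel_memI[of q g \<tau>] g(2) q by auto
  qed
  moreover have "inj_on (relabel \<tau>) (perfect_matchings N)"
    by (rule inj_onI) (metis \<tau>_def relabel_transpose_involutory)
  ultimately show ?thesis
    by (intro card_inj_on_le[of "relabel \<tau>"]) (auto simp: finite_perfect_matchings intro: inj_on_subset)
qed

lemma sum_card_matchings_edge_le:
  assumes "C \<subseteq> {1..N}" "a \<notin> C"
  shows "(\<Sum>c\<in>C. card {g \<in> perfect_matchings N. F \<subseteq> g \<and> edge a c \<in> g})
      \<le> card {g \<in> perfect_matchings N. F \<subseteq> g}"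
proof -
  have disjoint: "{g \<in> perfect_matchings N. F \<subseteq> g \<and> edge a c \<in> g} \<inter>
      {g \<in> perfect_matchings N. F \<subseteq> g \<and> edge a c' \<in> g} = {}" if "c \<in> C" "c' \<in> C" "c \<noteq> c'" for c c'
  proof -
    have "edge a c \<noteq> edge a c'"
      using that assms(2) by (metis doubleton_eq_iff endpoints_edge)
    then show ?thesis using perfect_matching_pair_eqI[of _ N "edge a c" "edge a c'" a] by auto
  qed
  have "(\<Sum>c\<in>C. card {g \<in> perfect_matchings N. F \<subseteq> g \<and> edge a c \<in> g})
      = card (\<Union>c\<in>C. {g \<in> perfect_matchings N. F \<subseteq> g \<and> edge a c \<in> g})"
    using assms(1) disjoint finite_perfect_matchings
    by (intro card_UN_disjoint[symmetric]) (auto intro: finite_subset)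
  also have "\<dots> \<le> card {g \<in> perfect_matchings N. F \<subseteq> g}"
    by (rule card_mono) (use finite_perfect_matchings in auto)
  finally show ?thesis .
qed

lemma card_matchings_insert_le:
  assumes ab: "a < b" "a \<in> {1..N}" "b \<in> {1..N}"
    and F: "\<forall>q\<in>F. fst q < snd q" "support F \<subseteq> {1..N}" "a \<notin> support F" "b \<notin> support F"
  shows "(N - 1 - card (support F)) * card {g \<in> perfect_matchings N. insert (a, b) F \<subseteq> g}
      \<le> card {g \<in> perfect_matchings N. F \<subseteq> g}"
proof -
  let ?C = "{1..N} - insert a (support F)"
  have "finite (support F)" using F(2) finite_subset by blast
  then have "card ?C = N - 1 - card (support F)"
    using ab F by (subst card_Diff_subset) auto
  then have "(N - 1 - card (support F)) * card {g \<in> perfect_matchings N. insert (a, b) F \<subseteq> g}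
      = (\<Sum>c\<in>?C. card {g \<in> perfect_matchings N. F \<subseteq> g \<and> edge a b \<in> g})"
    using ab by (simp add: edge_ordered conj_commute)
  also have "\<dots> \<le> (\<Sum>c\<in>?C. card {g \<in> perfect_matchings N. F \<subseteq> g \<and> edge a c \<in> g})"
    using ab F by (intro sum_mono card_matchings_edge_le) (auto simp: support_def)
  also have "\<dots> \<le> card {g \<in> perfect_matchings N. F \<subseteq> g}"
    by (rule sum_card_matchings_edge_le) auto
  finally show ?thesis .
qed

lemma card_matchings_pair_le:
  assumes "a < b" "a \<in> {1..N}" "b \<in> {1..N}"
  shows "(N - 1) * card {g \<in> perfect_matchings N. (a, b) \<in> g} \<le> card (perfect_matchings N)"
  using card_matchings_insert_le[of a b N "{}"] assms by simp

lemma card_matchings_two_pairs_le: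
  assumes p: "a < b" "a \<in> {1..N}" "b \<in> {1..N}" and q: "a' < b'" "a' \<in> {1..N}" "b' \<in> {1..N}"
    and disj: "{a, b} \<inter> {a', b'} = {}"
  shows "(N - 1) * (N - 3) * card {g \<in> perfect_matchings N. {(a, b), (a', b')} \<subseteq> g}
      \<le> card (perfect_matchings N)"
proof -
  have "card {a', b'} = 2" using q by simp
  then have "(N - 3) * card {g \<in> perfect_matchings N. {(a, b), (a', b')} \<subseteq> g}
      \<le> card {g \<in> perfect_matchings N. (a', b') \<in> g}"
    using card_matchings_insert_le[of a b N "{(a', b')}"] p q disj
    by (simp add: endpoints_def numeral_3_eq_3)
  then have "(N - 1) * (N - 3) * card {g \<in> perfect_matchings N. {(a, b), (a', b')} \<subseteq> g}
      \<le> (N - 1) * card {g \<in> perfect_matchings N. (a', b') \<in> g}"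
    by (simp add: mult.assoc)
  also have "\<dots> \<le> card (perfect_matchings N)"
    using card_matchings_pair_le q by blast
  finally show ?thesis .
qed

section \<open>The switching\<close>

lemma switch_step_exchange:
  assumes g: "g \<in> perfect_matchings N" and p: "p \<in> g"
    and t: "t \<in> {1..N}" "t \<noteq> fst p" "t = sorted_list_of_set ({1..N} - ({fst p} \<union> excl)) ! (B - 1)"
  defines "q \<equiv> edge t (partner g t)" and "g' \<equiv> switch_step N g p excl B"
  shows "g' \<in> perfect_matchings N" "g - {p, q} \<subseteq> g'" "g - g' \<subseteq> {p, q}"
    "\<forall>y\<in>g' - g. endpoints y \<inter> endpoints p \<noteq> {}"
proof -
  have g'_eq: "g' = (if t = snd p then g
      else (g - {edge (fst p) (snd p), q}) \<union> {edge (fst p) t, edge (snd p) (partner g t)})"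
    unfolding g'_def q_def switch_step_def Let_def t(3) by simp
  have "g' \<in> perfect_matchings N \<and> g - {p, q} \<subseteq> g' \<and> g - g' \<subseteq> {p, q} \<and>
    (\<forall>y\<in>g' - g. endpoints y \<inter> endpoints p \<noteq> {})"
  proof (cases "t = snd p")
    case True
    then show ?thesis using g'_eq g by auto
  next
    case False
    obtain r where r: "r \<in> g" "t \<in> endpoints r" using perfect_matching_covers[OF g t(1)] by blast
    have "q = r" unfolding q_def using partner_edge[OF g r] .
    have "p \<noteq> q" using r t(2) False \<open>q = r\<close> perfect_matching_pair_eqI[OF g] p
      by (auto simp: endpoints_def)
    have g'_swap: "g' = (g - {p, q}) \<union> {edge (fst p) t, edge (snd p) (partner g t)}"
      using g'_eq False perfect_matchingD[OF g p] by (simp add: edge_ordered)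
    have "g' \<in> perfect_matchings N"
      unfolding g'_swap
      by (rule perfect_matching_exchange[OF g p r(1)[folded \<open>q = r\<close>] \<open>p \<noteq> q\<close>])
        (simp_all add: endpoints_def[of p] q_def)
    then show ?thesis using g'_swap by (auto simp: endpoints_def[of p])
  qed
  then show "g' \<in> perfect_matchings N" "g - {p, q} \<subseteq> g'" "g - g' \<subseteq> {p, q}"
    "\<forall>y\<in>g' - g. endpoints y \<inter> endpoints p \<noteq> {}"
    by auto
qed

lemma switch_target:
  fixes a :: nat
  assumes "finite excl" "card excl \<le> 2 * m" "B \<in> {1..N - 2 * m - 1}"
  defines "t \<equiv> sorted_list_of_set ({1..N} - ({a} \<union> excl)) ! (B - 1)"
  shows "t \<in> {1..N}" "t \<noteq> a" "t \<notin> excl"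
proof -
  let ?S = "{1..N} - ({a} \<union> excl)"
  have "card ({a} \<union> excl) \<le> 1 + 2 * m"
    using card_Un_le[of "{a}" excl] assms(2) by simp
  moreover have "card {1..N} - card ({a} \<union> excl) \<le> card ?S"
    by (rule diff_card_le_card_Diff) (simp add: assms(1))
  ultimately have "B - 1 < length (sorted_list_of_set ?S)" using assms(3) by auto
  then have "t \<in> ?S" unfolding t_def by (metis nth_mem finite_Diff finite_atLeastAtMost set_sorted_list_of_set)
  then show "t \<in> {1..N}" "t \<noteq> a" "t \<notin> excl" by auto
qed

lemma switch_iter_Suc_support:
  "switch_iter N ps Bs g (Suc k) =
    switch_step N (switch_iter N ps Bs g k) (ps ! k) (support (set (drop (Suc k) ps))) (Bs (Suc k))"
  by (simp add: support_def endpoints_def)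

text \<open>The set \<open>T\<close> collects the targets chosen in the first \<open>k\<close> steps.\<close>

definition switch_invariant ::
    "nat \<Rightarrow> (nat \<times> nat) list \<Rightarrow> (nat \<times> nat) set \<Rightarrow> nat \<Rightarrow> (nat \<times> nat) set \<Rightarrow> bool" where
  "switch_invariant N ps g k h \<longleftrightarrow> h \<in> perfect_matchings N
    \<and> (\<forall>j. k \<le> j \<and> j < length ps \<longrightarrow> ps ! j \<in> h)
    \<and> (\<exists>T. finite T \<and> card T \<le> k \<and> (\<forall>y\<in>g - h. y \<in> set ps \<or> endpoints y \<inter> T \<noteq> {}))
    \<and> (\<forall>y\<in>h - g. endpoints y \<inter> support (set ps) \<noteq> {})"

lemma switch_invariant_step:
  assumes inv: "switch_invariant N ps g k h" and "distinct ps" "k < length ps"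
    and B: "B \<in> {1..N - 2 * (length ps - Suc k) - 1}"
  shows "switch_invariant N ps g (Suc k) (switch_step N h (ps ! k) (support (set (drop (Suc k) ps))) B)"
proof -
  define p where "p = ps ! k"
  define excl where "excl = support (set (drop (Suc k) ps))"
  define t where "t = sorted_list_of_set ({1..N} - ({fst p} \<union> excl)) ! (B - 1)"
  define h' where "h' = switch_step N h p excl B"
  obtain T where h: "h \<in> perfect_matchings N" "\<forall>j. k \<le> j \<and> j < length ps \<longrightarrow> ps ! j \<in> h"
      "finite T" "card T \<le> k" "\<forall>y\<in>g - h. y \<in> set ps \<or> endpoints y \<inter> T \<noteq> {}"
      "\<forall>y\<in>h - g. endpoints y \<inter> support (set ps) \<noteq> {}"
    using inv unfolding switch_invariant_def by blast
  have p: "p \<in> h" "p \<in> set ps" using h(2) \<open>k < length ps\<close> unfolding p_def by auto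
  have "card excl \<le> 2 * (length ps - Suc k)"
    unfolding excl_def using card_support_le[of "set (drop (Suc k) ps)"] card_length[of "drop (Suc k) ps"]
    by simp
  moreover have "finite excl" unfolding excl_def support_def by (simp add: endpoints_def)
  ultimately have t: "t \<in> {1..N}" "t \<noteq> fst p" "t \<notin> excl"
    using switch_target[of excl _ B N "fst p", folded t_def] B by blast+
  define q where "q = edge t (partner h t)"
  note exch = switch_step_exchange[OF h(1) p(1) t(1,2) t_def, folded q_def h'_def]
  have "ps ! j \<in> h'" if j: "Suc k \<le> j" "j < length ps" for j
  proof -
    have "ps ! j \<in> set (drop (Suc k) ps)" using j by (auto simp: in_set_conv_nth intro: exI[of _ "j - Suc k"])
    then have "ps ! j \<noteq> q" using t(3) by (auto simp: excl_def support_def q_def)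
    moreover have "ps ! j \<noteq> p" using \<open>distinct ps\<close> j unfolding p_def by (simp add: nth_eq_iff_index_eq)
    ultimately show ?thesis using exch(2) h(2) j by auto
  qed
  moreover have "\<forall>y\<in>g - h'. y \<in> set ps \<or> endpoints y \<inter> insert t T \<noteq> {}"
    using exch(3) h(5) p(2) by (fastforce simp: q_def)
  moreover have "finite (insert t T)" "card (insert t T) \<le> Suc k"
    using h(3,4) by (auto simp: card_insert_if)
  moreover have "\<forall>y\<in>h' - g. endpoints y \<inter> support (set ps) \<noteq> {}"
    using exch(4) h(6) p(2) by (fastforce simp: support_def)
  ultimately show ?thesis
    using exch(1) unfolding switch_invariant_def h'_def p_def excl_def by blast
qed

lemma switch_iter_invariant:
  assumes "g \<in> perfect_matchings N" "set ps \<subseteq> g" "distinct ps"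
    and Bs: "\<forall>l\<in>{1..length ps}. Bs l \<in> {1..N - 2 * (length ps - l) - 1}"
  shows "k \<le> length ps \<Longrightarrow> switch_invariant N ps g k (switch_iter N ps Bs g k)"
proof (induction k)
  case 0
  then show ?case using assms(1,2) by (auto simp: switch_invariant_def intro: exI[of _ "{}"])
next
  case (Suc k)
  then show ?case
    unfolding switch_iter_Suc_support using Bs assms(3) by (intro switch_invariant_step) auto
qed

lemma pairs_list_props:
  assumes "finite \<alpha>" "inj_on fst \<alpha>"
  shows "set (pairs_list \<alpha>) = \<alpha>" "distinct (pairs_list \<alpha>)" "length (pairs_list \<alpha>) = card \<alpha>"
proof -
  define f where "f = (\<lambda>a. THE p. p \<in> \<alpha> \<and> fst p = a)"
  have f: "f (fst p) = p" if "p \<in> \<alpha>" for p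
    unfolding f_def by (rule the_equality) (use assms(2) that in \<open>auto simp: inj_on_def\<close>)
  have pl: "pairs_list \<alpha> = map f (sorted_list_of_set (fst ` \<alpha>))"
    unfolding pairs_list_def f_def ..
  show "set (pairs_list \<alpha>) = \<alpha>" unfolding pl using assms(1) f by (auto simp: image_iff) (metis f)
  have "inj_on f (fst ` \<alpha>)" using f by (auto simp: inj_on_def)
  then show "distinct (pairs_list \<alpha>)" unfolding pl using assms(1) by (simp add: distinct_map)
  show "length (pairs_list \<alpha>) = card \<alpha>" unfolding pl using assms by (simp add: card_image)
qed

lemma switched_changes:
  assumes g: "g \<in> perfect_matchings N" and "\<alpha> \<subseteq> g"
    and Bs: "\<forall>l\<in>{1..card \<alpha>}. Bs l \<in> {1..N - 2 * (card \<alpha> - l) - 1}"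
  defines "g' \<equiv> switched N \<alpha> Bs g"
  shows "g' \<in> perfect_matchings N"
    and "\<exists>T. finite T \<and> card T \<le> card \<alpha> \<and> (\<forall>y\<in>g - g'. y \<in> \<alpha> \<or> endpoints y \<inter> T \<noteq> {})"
    and "\<forall>y\<in>g' - g. endpoints y \<inter> support \<alpha> \<noteq> {}"
proof -
  have "finite \<alpha>" using perfect_matching_finite[OF g] \<open>\<alpha> \<subseteq> g\<close> finite_subset by blast
  moreover have "inj_on fst \<alpha>"
  proof (rule inj_onI)
    fix p q assume "p \<in> \<alpha>" "q \<in> \<alpha>" "fst p = fst q"
    then show "p = q"
      using perfect_matching_pair_eqI[OF g, of p q "fst p"] \<open>\<alpha> \<subseteq> g\<close> by (auto simp: endpoints_def)
  qed
  ultimately have ps: "set (pairs_list \<alpha>) = \<alpha>" "distinct (pairs_list \<alpha>)" "length (pairs_list \<alpha>) = card \<alpha>"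
    by (rule pairs_list_props)+
  have "g' = switch_iter N (pairs_list \<alpha>) Bs g (length (pairs_list \<alpha>))"
    unfolding g'_def switched_def using \<open>\<alpha> \<subseteq> g\<close> ps by simp
  then show "g' \<in> perfect_matchings N"
    and "\<exists>T. finite T \<and> card T \<le> card \<alpha> \<and> (\<forall>y\<in>g - g'. y \<in> \<alpha> \<or> endpoints y \<inter> T \<noteq> {})"
    and "\<forall>y\<in>g' - g. endpoints y \<inter> support \<alpha> \<noteq> {}"
    using switch_iter_invariant[OF g, of "pairs_list \<alpha>" Bs "length (pairs_list \<alpha>)"] ps Bs \<open>\<alpha> \<subseteq> g\<close>
    by (auto simp: switch_invariant_def)
qed

section \<open>Members of \<open>\<Gamma>\<^sub>1\<close> inside a matching\<close>

lemma Gamma1_subset: "Gamma1 n d \<subseteq> Pow ({1..dsum d n} \<times> {1..dsum d n})"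
proof -
  have "edge s t \<in> {1..dsum d n} \<times> {1..dsum d n}"
    if "s \<in> half_edges d i" "t \<in> half_edges d j" "i \<in> {1..n}" "j \<in> {1..n}" for s t i j
    using that half_edges_subset[of i n d] half_edges_subset[of j n d]
    by (auto simp: edge_def min_def max_def)
  then show ?thesis
    unfolding Gamma1_def Gamma11_def Gamma12_def by blast
qed

lemma finite_Gamma1: "finite (Gamma1 n d)"
  using Gamma1_subset by (rule finite_subset) simp

lemma doubleton_min_max: "{min a b, max a b} = {a, b :: 'a :: linorder}"
  by (auto simp: min_def max_def)

lemma Gamma11_cases:
  assumes "\<alpha> \<in> Gamma11 n d"
  obtains a b where "\<alpha> = {(a, b)}" "a < b" "a \<in> {1..dsum d n}" "b \<in> {1..dsum d n}"
proof -
  obtain s t i j where st: "\<alpha> = {edge s t}" "i \<in> {1..n}" "j \<in> {1..n}" "i < j"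
      "s \<in> half_edges d i" "t \<in> half_edges d j"
    using assms by (auto simp: Gamma11_def)
  then have "s \<noteq> t" using half_edges_unique_vertex by blast
  moreover have "s \<in> {1..dsum d n}" "t \<in> {1..dsum d n}"
    using st half_edges_subset[of i n d] half_edges_subset[of j n d] by auto
  ultimately show ?thesis
    using that[of "min s t" "max s t"] st(1) by (auto simp: edge_def)
qed

lemma Gamma12_cases:
  assumes "\<alpha> \<in> Gamma12 n d"
  obtains a b a' b' where "\<alpha> = {(a, b), (a', b')}" "a < b" "a' < b'"
    "{a, b, a', b'} \<subseteq> {1..dsum d n}" "{a, b} \<inter> {a', b'} = {}"
proof -
  obtain s t u v i j k where st: "\<alpha> = {edge s u, edge t v}" "i \<in> {1..n}" "j \<in> {1..n}" "k \<in> {1..n}"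
      "i < j" "d i = 1" "d j = 1" "d k = 2"
      "s \<in> half_edges d i" "t \<in> half_edges d j" "u \<in> half_edges d k" "v \<in> half_edges d k" "u \<noteq> v"
    using assms by (auto simp: Gamma12_def)
  have "i \<noteq> k" "j \<noteq> k" using st by auto
  then have "s \<noteq> t" "s \<noteq> u" "s \<noteq> v" "t \<noteq> u" "t \<noteq> v"
    using half_edges_unique_vertex st by (metis less_irrefl)+
  have range: "{s, t, u, v} \<subseteq> {1..dsum d n}"
    using st half_edges_subset[of i n d] half_edges_subset[of j n d] half_edges_subset[of k n d] by auto
  show ?thesis
  proof (rule that)
    show "\<alpha> = {(min s u, max s u), (min t v, max t v)}" using st(1) by (simp add: edge_def)
    show "min s u < max s u" "min t v < max t v"
      using \<open>s \<noteq> u\<close> \<open>t \<noteq> v\<close> by (simp_all add: min_def max_def)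
    show "{min s u, max s u, min t v, max t v} \<subseteq> {1..dsum d n}"
      using range by (simp add: min_def max_def)
    show "{min s u, max s u} \<inter> {min t v, max t v} = {}"
      using \<open>s \<noteq> t\<close> \<open>s \<noteq> v\<close> \<open>t \<noteq> u\<close> \<open>u \<noteq> v\<close> by (simp add: doubleton_min_max)
  qed
qed

lemma card_Gamma11: "\<alpha> \<in> Gamma11 n d \<Longrightarrow> card \<alpha> = 1"
  by (erule Gamma11_cases) simp

lemma card_Gamma12: "\<alpha> \<in> Gamma12 n d \<Longrightarrow> card \<alpha> = 2"
  by (erule Gamma12_cases) auto

lemma Gamma11_Gamma12_disjoint: "Gamma11 n d \<inter> Gamma12 n d = {}"
  using card_Gamma11 card_Gamma12 by fastforce

lemma card_Gamma1_le: "\<alpha> \<in> Gamma1 n d \<Longrightarrow> card \<alpha> \<le> 2"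
  unfolding Gamma1_def using card_Gamma11 card_Gamma12 by fastforce

lemma Gamma1_degree_2_block:
  assumes "\<beta> \<in> Gamma1 n d" "w \<in> support \<beta>" "w \<in> half_edges d k" "d k = 2" "k \<ge> 1"
  shows "half_edges d k \<subseteq> support \<beta>"
  using assms(1) unfolding Gamma1_def
proof
  assume "\<beta> \<in> Gamma11 n d"
  then obtain s t i j where b: "\<beta> = {edge s t}" "d i = 1" "d j = 1"
      "s \<in> half_edges d i" "t \<in> half_edges d j"
    by (auto simp: Gamma11_def)
  have "w = s \<or> w = t" using assms(2) b(1) by (simp add: support_def)
  then have "k = i \<or> k = j" using half_edges_unique_vertex assms(3) b(4,5) by metis
  then show ?thesis using assms(4) b(2,3) by auto
next
  assume "\<beta> \<in> Gamma12 n d"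
  then obtain s t u v i j k' where b: "\<beta> = {edge s u, edge t v}" "d i = 1" "d j = 1"
      "s \<in> half_edges d i" "t \<in> half_edges d j" "u \<in> half_edges d k'" "v \<in> half_edges d k'" "u \<noteq> v"
    by (auto simp: Gamma12_def)
  have "w = s \<or> w = t \<or> w = u \<or> w = v" using assms(2) b(1) by (auto simp: support_def)
  moreover have "w \<noteq> s" "w \<noteq> t"
    using half_edges_unique_vertex assms(3,4) b(2-5) by (metis numeral_eq_one_iff semiring_norm(85))+
  ultimately have "w = u \<or> w = v" by blast
  then have "k' = k" using b assms(3) half_edges_unique_vertex by metis
  then have "{u, v} \<subseteq> half_edges d k" using b by auto
  moreover have "card (half_edges d k) = card {u, v}"
    using card_half_edges assms(4,5) b(8) by auto
  ultimately have "half_edges d k = {u, v}"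
    by (metis card_subset_eq finite_atLeastAtMost half_edges_def)
  then show ?thesis using b by (auto simp: support_def)
qed

lemma Gamma1_subset_if_common_pair:
  assumes M: "M \<in> perfect_matchings N" and "\<beta> \<in> Gamma1 n d" "\<beta>' \<in> Gamma1 n d"
    and "\<beta> \<subseteq> M" "\<beta>' \<subseteq> M" "y \<in> \<beta>" "y \<in> \<beta>'"
  shows "\<beta> \<subseteq> \<beta>'"
  using \<open>\<beta> \<in> Gamma1 n d\<close> unfolding Gamma1_def
proof
  assume "\<beta> \<in> Gamma11 n d"
  then show ?thesis using \<open>y \<in> \<beta>\<close> \<open>y \<in> \<beta>'\<close> by (auto simp: Gamma11_def)
next
  assume "\<beta> \<in> Gamma12 n d"
  then obtain s t u v k where b: "\<beta> = {edge s u, edge t v}" "d k = 2" "k \<ge> 1"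
      "u \<in> half_edges d k" "v \<in> half_edges d k"
    by (auto simp: Gamma12_def)
  obtain w where "w \<in> half_edges d k" "w \<in> endpoints y"
    using b \<open>y \<in> \<beta>\<close> by auto
  then have "w \<in> support \<beta>'" using \<open>y \<in> \<beta>'\<close> by (auto simp: support_def)
  then have block: "half_edges d k \<subseteq> support \<beta>'"
    using Gamma1_degree_2_block[OF \<open>\<beta>' \<in> Gamma1 n d\<close> _ \<open>w \<in> half_edges d k\<close> b(2,3)] by blast
  have shared: "r \<in> \<beta>'" if r: "r \<in> \<beta>" "x \<in> endpoints r" "x \<in> half_edges d k" for r x
  proof -
    obtain r' where "r' \<in> \<beta>'" "x \<in> endpoints r'" using block r(3) by (auto simp: support_def)
    then show ?thesis
      using perfect_matching_pair_eqI[OF M, of r' r x] r \<open>\<beta> \<subseteq> M\<close> \<open>\<beta>' \<subseteq> M\<close> by auto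
  qed
  then show ?thesis using shared[of "edge s u" u] shared[of "edge t v" v] b by auto
qed

lemma Gamma1_matching_eqI:
  assumes M: "M \<in> perfect_matchings N" and "\<beta> \<in> Gamma1 n d" "\<beta>' \<in> Gamma1 n d"
    and "\<beta> \<subseteq> M" "\<beta>' \<subseteq> M" "w \<in> support \<beta>" "w \<in> support \<beta>'"
  shows "\<beta> = \<beta>'"
proof -
  obtain y y' where "y \<in> \<beta>" "y' \<in> \<beta>'" "w \<in> endpoints y" "w \<in> endpoints y'"
    using assms(6,7) by (auto simp: support_def)
  moreover from this have "y = y'"
    using perfect_matching_pair_eqI[OF M] assms(4,5) by blast
  ultimately show ?thesis
    using Gamma1_subset_if_common_pair[OF M] assms(2-5) by (metis subset_antisym)
qed

definition Gamma1_at :: "nat \<Rightarrow> (nat \<Rightarrow> nat) \<Rightarrow> (nat \<times> nat) set \<Rightarrow> nat \<Rightarrow> (nat \<times> nat) set set" where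
  "Gamma1_at n d M w = {\<beta> \<in> Gamma1 n d. \<beta> \<subseteq> M \<and> w \<in> support \<beta>}"

lemma card_UN_Gamma1_at_le:
  assumes "M \<in> perfect_matchings N" "finite W"
  shows "card (\<Union>w\<in>W. Gamma1_at n d M w) \<le> card W"
proof -
  have "card (Gamma1_at n d M w) \<le> 1" for w
  proof -
    have "finite (Gamma1_at n d M w)"
      using finite_Gamma1 by (auto simp: Gamma1_at_def)
    moreover have "\<forall>\<beta>\<in>Gamma1_at n d M w. \<forall>\<beta>'\<in>Gamma1_at n d M w. \<beta> = \<beta>'"
      using Gamma1_matching_eqI[OF assms(1)] unfolding Gamma1_at_def by blast
    ultimately show ?thesis by (simp add: card_le_Suc0_iff_eq)
  qed
  then have "(\<Sum>w\<in>W. card (Gamma1_at n d M w)) \<le> card W"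
    using sum_mono[of W "\<lambda>w. card (Gamma1_at n d M w)" "\<lambda>_. 1"] by simp
  then show ?thesis
    using card_UN_le[OF assms(2), of "Gamma1_at n d M"] by linarith
qed

text \<open>For \<open>\<alpha> \<in> \<Gamma>\<^sub>1\<^sub>2\<close> one half-edge of the degree-2 vertex can be dropped: a member of
  \<open>\<Gamma>\<^sub>1\<close> containing it contains the whole block.\<close>

lemma Gamma1_hitting_set:
  assumes "\<alpha> \<in> Gamma1 n d"
  obtains W where "finite W" "card W \<le> (if \<alpha> \<in> Gamma11 n d then 2 else 3)"
    "\<And>\<beta>. \<beta> \<in> Gamma1 n d \<Longrightarrow> support \<beta> \<inter> support \<alpha> \<noteq> {} \<Longrightarrow> support \<beta> \<inter> W \<noteq> {}"
proof (cases "\<alpha> \<in> Gamma11 n d")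
  case True
  then obtain a b where "\<alpha> = {(a, b)}" by (rule Gamma11_cases)
  then show ?thesis
    using that[of "support \<alpha>"] True by (simp add: support_def endpoints_def card_insert_le_m1)
next
  case False
  then have "\<alpha> \<in> Gamma12 n d" using assms by (simp add: Gamma1_def)
  then obtain s t u v k where \<alpha>: "\<alpha> = {edge s u, edge t v}" "d k = 2" "k \<ge> 1"
      "u \<in> half_edges d k" "v \<in> half_edges d k"
    by (auto simp: Gamma12_def)
  have "support \<beta> \<inter> {s, t, u} \<noteq> {}"
    if "\<beta> \<in> Gamma1 n d" "support \<beta> \<inter> support \<alpha> \<noteq> {}" for \<beta>
  proof (cases "v \<in> support \<beta>")
    case True
    then have "u \<in> support \<beta>" using Gamma1_degree_2_block[OF that(1) True \<alpha>(5,2,3)] \<alpha>(4) by blast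
    then show ?thesis by blast
  next
    case False
    then show ?thesis using that(2) \<alpha>(1) by (auto simp: support_def)
  qed
  moreover have "card {s, t, u} \<le> 3" by (simp add: card_insert_le_m1)
  ultimately show ?thesis using that[of "{s, t, u}"] False by simp
qed

lemma Gamma1_lost_subset:
  assumes g: "g \<in> perfect_matchings N" and \<alpha>: "\<alpha> \<in> Gamma1 n d" "\<alpha> \<subseteq> g"
    and lost: "\<forall>y\<in>g - g'. y \<in> \<alpha> \<or> endpoints y \<inter> T \<noteq> {}"
  shows "{\<beta> \<in> Gamma1 n d. \<beta> \<subseteq> g \<and> \<not> \<beta> \<subseteq> g'} \<subseteq> insert \<alpha> (\<Union>w\<in>T. Gamma1_at n d g w)"
proof (rule subsetI)
  fix \<beta> assume "\<beta> \<in> {\<beta> \<in> Gamma1 n d. \<beta> \<subseteq> g \<and> \<not> \<beta> \<subseteq> g'}"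
  then have \<beta>: "\<beta> \<in> Gamma1 n d" "\<beta> \<subseteq> g" and "\<not> \<beta> \<subseteq> g'" by auto
  then obtain y where y: "y \<in> \<beta>" "y \<in> g - g'" by blast
  show "\<beta> \<in> insert \<alpha> (\<Union>w\<in>T. Gamma1_at n d g w)"
  proof (cases "y \<in> \<alpha>")
    case True
    then have "fst y \<in> support \<beta>" "fst y \<in> support \<alpha>" using y(1) by (auto simp: support_def endpoints_def)
    then show ?thesis using Gamma1_matching_eqI[OF g \<beta>(1) \<alpha>(1) \<beta>(2) \<alpha>(2)] by blast
  next
    case False
    then show ?thesis using lost y \<beta> by (auto simp: Gamma1_at_def support_def)
  qed
qed

lemma Gamma1_gained_subset:
  assumes gained: "\<forall>y\<in>g' - g. endpoints y \<inter> support \<alpha> \<noteq> {}"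
    and W: "\<And>\<beta>. \<beta> \<in> Gamma1 n d \<Longrightarrow> support \<beta> \<inter> support \<alpha> \<noteq> {} \<Longrightarrow> support \<beta> \<inter> W \<noteq> {}"
  shows "{\<beta> \<in> Gamma1 n d. \<beta> \<subseteq> g' \<and> \<not> \<beta> \<subseteq> g} \<subseteq> (\<Union>w\<in>W. Gamma1_at n d g' w)"
proof (rule subsetI)
  fix \<beta> assume "\<beta> \<in> {\<beta> \<in> Gamma1 n d. \<beta> \<subseteq> g' \<and> \<not> \<beta> \<subseteq> g}"
  then have \<beta>: "\<beta> \<in> Gamma1 n d" "\<beta> \<subseteq> g'" and "\<not> \<beta> \<subseteq> g" by auto
  then obtain y where "y \<in> \<beta>" "y \<in> g' - g" by blast
  then have "support \<beta> \<inter> support \<alpha> \<noteq> {}" using gained by (auto simp: support_def)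
  then obtain w where "w \<in> W" "w \<in> support \<beta>" using W[OF \<beta>(1)] by blast
  then show "\<beta> \<in> (\<Union>w\<in>W. Gamma1_at n d g' w)" using \<beta> by (auto simp: Gamma1_at_def)
qed

lemma card_Gamma1_changed_le:
  assumes g: "g \<in> perfect_matchings N" and \<alpha>: "\<alpha> \<in> Gamma1 n d" "\<alpha> \<subseteq> g"
    and Bs: "\<forall>l\<in>{1..card \<alpha>}. Bs l \<in> {1..N - 2 * (card \<alpha> - l) - 1}"
  shows "card {\<beta> \<in> Gamma1 n d. (\<beta> \<subseteq> g) \<noteq> (\<beta> \<subseteq> switched N \<alpha> Bs g)}
    \<le> (if \<alpha> \<in> Gamma11 n d then 4 else 6)"
proof -
  define g' where "g' = switched N \<alpha> Bs g"
  note changes = switched_changes[OF g \<alpha>(2) Bs, folded g'_def]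
  obtain T where T: "finite T" "card T \<le> card \<alpha>" "\<forall>y\<in>g - g'. y \<in> \<alpha> \<or> endpoints y \<inter> T \<noteq> {}"
    using changes(2) by blast
  obtain W where W: "finite W" "card W \<le> (if \<alpha> \<in> Gamma11 n d then 2 else 3)"
    "\<And>\<beta>. \<beta> \<in> Gamma1 n d \<Longrightarrow> support \<beta> \<inter> support \<alpha> \<noteq> {} \<Longrightarrow> support \<beta> \<inter> W \<noteq> {}"
    using Gamma1_hitting_set[OF \<alpha>(1)] by blast
  let ?L = "\<Union>w\<in>T. Gamma1_at n d g w" and ?G = "\<Union>w\<in>W. Gamma1_at n d g' w"
  have fin: "finite ?L" "finite ?G"
    using finite_Gamma1 T(1) W(1) by (auto simp: Gamma1_at_def intro: finite_subset)
  have "{\<beta> \<in> Gamma1 n d. (\<beta> \<subseteq> g) \<noteq> (\<beta> \<subseteq> g')}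
      = {\<beta> \<in> Gamma1 n d. \<beta> \<subseteq> g \<and> \<not> \<beta> \<subseteq> g'} \<union> {\<beta> \<in> Gamma1 n d. \<beta> \<subseteq> g' \<and> \<not> \<beta> \<subseteq> g}"
    by blast
  also have "\<dots> \<subseteq> insert \<alpha> ?L \<union> ?G"
    by (rule Un_mono[OF Gamma1_lost_subset[OF g \<alpha> T(3)] Gamma1_gained_subset[OF changes(3) W(3)]])
  finally have "{\<beta> \<in> Gamma1 n d. (\<beta> \<subseteq> g) \<noteq> (\<beta> \<subseteq> g')} \<subseteq> insert \<alpha> ?L \<union> ?G" .
  then have "card {\<beta> \<in> Gamma1 n d. (\<beta> \<subseteq> g) \<noteq> (\<beta> \<subseteq> g')} \<le> card (insert \<alpha> ?L) + card ?G"
    using fin by (meson card_Un_le card_mono finite_Un finite_insert le_trans)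
  also have "\<dots> \<le> Suc (card ?L) + card ?G"
    using fin(1) by (simp add: card_insert_if)
  also have "\<dots> \<le> Suc (card \<alpha>) + card W"
    using card_UN_Gamma1_at_le[OF g T(1), of n d] card_UN_Gamma1_at_le[OF changes(1) W(1), of n d] T(2)
    by linarith
  finally show ?thesis
    unfolding g'_def using W(2) card_Gamma11 card_Gamma12 \<alpha>(1) by (auto simp: Gamma1_def)
qed

lemma sum_abs_Ind_Jind:
  assumes "finite \<Gamma>"
  shows "(\<Sum>\<beta>\<in>\<Gamma>. \<bar>Ind \<beta> g - Jind N \<beta> \<alpha> Bs g\<bar>)
    = real (card {\<beta> \<in> \<Gamma>. (\<beta> \<subseteq> g) \<noteq> (\<beta> \<subseteq> switched N \<alpha> Bs g)})"
proof -
  have "\<bar>Ind \<beta> g - Jind N \<beta> \<alpha> Bs g\<bar> = (if (\<beta> \<subseteq> g) \<noteq> (\<beta> \<subseteq> switched N \<alpha> Bs g) then 1 else 0)"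
    for \<beta>
    by (simp add: Ind_def Jind_def)
  then show ?thesis
    using sum.inter_filter[OF assms, of "\<lambda>_. 1 :: real"] by simp
qed

lemma sum_abs_Ind_Jind_le:
  assumes "g \<in> perfect_matchings N" "\<alpha> \<in> Gamma1 n d" "\<alpha> \<subseteq> g"
    and "\<forall>l\<in>{1..card \<alpha>}. Bs l \<in> {1..N - 2 * (card \<alpha> - l) - 1}"
  shows "(\<Sum>\<beta>\<in>Gamma1 n d. \<bar>Ind \<beta> g - Jind N \<beta> \<alpha> Bs g\<bar>) \<le> (if \<alpha> \<in> Gamma11 n d then 4 else 6)"
  using card_Gamma1_changed_le[OF assms] unfolding sum_abs_Ind_Jind[OF finite_Gamma1]
  by (simp split: if_splits)

lemma set_pmf_B_law:
  assumes "2 * card \<alpha> \<le> N"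
  shows "set_pmf (B_law N \<alpha>) = PiE_dflt {1..card \<alpha>} 0 (\<lambda>l. {1..N - 2 * (card \<alpha> - l) - 1})"
proof -
  have "set_pmf (pmf_of_set {1..N - 2 * (card \<alpha> - l) - 1}) = {1..N - 2 * (card \<alpha> - l) - 1}"
    if "l \<in> {1..card \<alpha>}" for l
    using that assms by (intro set_pmf_of_set) auto
  then show ?thesis
    unfolding B_law_def by (auto simp: set_Pi_pmf PiE_dflt_def)
qed

lemma set_pmf_coupling_law:
  assumes "even N"
  shows "set_pmf (coupling_law N d n)
    = perfect_matchings N \<times> PiE_dflt (Gamma1 n d) (\<lambda>_. 0) (set_pmf \<circ> B_law N)"
  unfolding coupling_law_def
  using finite_perfect_matchings perfect_matchings_nonempty[OF assms] finite_Gamma1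
  by (simp add: set_Pi_pmf)

lemma coupling_law_support:
  assumes "even N" "N > 3" "(g, B) \<in> set_pmf (coupling_law N d n)" "\<alpha> \<in> Gamma1 n d"
  shows "g \<in> perfect_matchings N" "\<forall>l\<in>{1..card \<alpha>}. B \<alpha> l \<in> {1..N - 2 * (card \<alpha> - l) - 1}"
proof -
  show "g \<in> perfect_matchings N" using assms(3) set_pmf_coupling_law[OF assms(1)] by auto
  have "B \<alpha> \<in> set_pmf (B_law N \<alpha>)"
    using assms(3,4) set_pmf_coupling_law[OF assms(1)] by (auto simp: PiE_dflt_def)
  moreover have "2 * card \<alpha> \<le> N" using card_Gamma1_le[OF assms(4)] assms(2) by linarith
  ultimately show "\<forall>l\<in>{1..card \<alpha>}. B \<alpha> l \<in> {1..N - 2 * (card \<alpha> - l) - 1}"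
    by (auto simp: set_pmf_B_law PiE_dflt_def)
qed

lemma finite_set_pmf_coupling_law:
  assumes "even N" "N > 3"
  shows "finite (set_pmf (coupling_law N d n))"
proof -
  have "finite (set_pmf (B_law N \<alpha>))" if "\<alpha> \<in> Gamma1 n d" for \<alpha>
  proof -
    have "2 * card \<alpha> \<le> N" using card_Gamma1_le[OF that] assms(2) by linarith
    then show ?thesis by (auto simp: set_pmf_B_law)
  qed
  then show ?thesis
    unfolding set_pmf_coupling_law[OF assms(1)]
    using finite_perfect_matchings finite_Gamma1 by (intro finite_cartesian_product finite_PiE_dflt) auto
qed

lemma expectation_switching_le_prob:
  assumes "even N" "N > 3" and \<alpha>: "\<alpha> \<in> Gamma1 n d"
  defines "K \<equiv> if \<alpha> \<in> Gamma11 n d then 16 else 36"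
  shows "measure_pmf.expectation (coupling_law N d n)
           (\<lambda>(g, B). Ind \<alpha> g
              * (\<Sum>\<beta>\<in>Gamma1 n d. \<bar>Ind \<beta> g - Jind N \<beta> \<alpha> (B \<alpha>) g\<bar>)
              * (\<Sum>\<gamma>\<in>Gamma1 n d. \<bar>Ind \<gamma> g - Jind N \<gamma> \<alpha> (B \<alpha>) g\<bar>))
     \<le> K * (real (card {g \<in> perfect_matchings N. \<alpha> \<subseteq> g}) / real (card (perfect_matchings N)))"
    (is "measure_pmf.expectation _ ?f \<le> _")
proof -
  have fin: "finite (set_pmf (coupling_law N d n))"
    using finite_set_pmf_coupling_law[OF assms(1,2)] .
  have "?f x \<le> K * Ind \<alpha> (fst x)" if "x \<in> set_pmf (coupling_law N d n)" for x
  proof -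
    obtain g B where x: "x = (g, B)" by force
    note supp = coupling_law_support[OF assms(1,2) that[unfolded x] \<alpha>]
    let ?X = "\<Sum>\<beta>\<in>Gamma1 n d. \<bar>Ind \<beta> g - Jind N \<beta> \<alpha> (B \<alpha>) g\<bar>"
    show ?thesis
    proof (cases "\<alpha> \<subseteq> g")
      case True
      have "?X \<le> (if \<alpha> \<in> Gamma11 n d then 4 else 6)" "0 \<le> ?X"
        using sum_abs_Ind_Jind_le[OF supp(1) \<alpha> True supp(2)] by (auto intro: sum_nonneg)
      then have "?X * ?X \<le> K"
        unfolding K_def by (cases "\<alpha> \<in> Gamma11 n d") (auto intro: order.trans[OF mult_mono])
      then show ?thesis using True x by (simp add: Ind_def)
    qed (simp add: x Ind_def)
  qed
  then have "measure_pmf.expectation (coupling_law N d n) ?f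
      \<le> measure_pmf.expectation (coupling_law N d n) (\<lambda>x. K * Ind \<alpha> (fst x))"
    using fin by (intro integral_mono_AE AE_pmfI integrable_measure_pmf_finite)
  also have "\<dots> = measure_pmf.expectation (pmf_of_set (perfect_matchings N)) (\<lambda>g. K * Ind \<alpha> g)"
    unfolding coupling_law_def by (simp flip: map_fst_pair_pmf[of _ "Pi_pmf (Gamma1 n d) (\<lambda>_. 0) (B_law N)"])
  also have "\<dots> = K * (real (card {g \<in> perfect_matchings N. \<alpha> \<subseteq> g}) / real (card (perfect_matchings N)))"
    using finite_perfect_matchings perfect_matchings_nonempty[OF assms(1)]
    by (simp add: integral_pmf_of_set Ind_def sum.If_cases Int_def flip: sum_distrib_left)
  finally show ?thesis .
qed

lemma divide_le_one_divideI:
  fixes a b k :: real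
  assumes "k * a \<le> b" "0 < b" "0 < k"
  shows "a / b \<le> 1 / k"
  using assms by (simp add: field_simps)

lemma prob_Gamma11_le:
  assumes "N = dsum d n" "N > 1" "even N" "\<alpha> \<in> Gamma11 n d"
  shows "real (card {g \<in> perfect_matchings N. \<alpha> \<subseteq> g}) / real (card (perfect_matchings N))
    \<le> 1 / (real N - 1)"
proof -
  obtain a b where ab: "\<alpha> = {(a, b)}" "a < b" "a \<in> {1..N}" "b \<in> {1..N}"
    using assms(1,4) by (auto elim: Gamma11_cases)
  have "(N - 1) * card {g \<in> perfect_matchings N. \<alpha> \<subseteq> g} \<le> card (perfect_matchings N)"
    using card_matchings_pair_le[OF ab(2-4)] ab(1) by simp
  then have "real (N - 1) * real (card {g \<in> perfect_matchings N. \<alpha> \<subseteq> g}) \<le> real (card (perfect_matchings N))"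
    by (metis of_nat_le_iff of_nat_mult)
  moreover have "real (N - 1) = real N - 1" using assms(2) by (simp add: of_nat_diff)
  moreover have "card (perfect_matchings N) > 0"
    using finite_perfect_matchings perfect_matchings_nonempty[OF assms(3)] by (simp add: card_gt_0_iff)
  ultimately show ?thesis using assms(2) by (intro divide_le_one_divideI) simp_all
qed

lemma prob_Gamma12_le:
  assumes "N = dsum d n" "N > 3" "even N" "\<alpha> \<in> Gamma12 n d"
  shows "real (card {g \<in> perfect_matchings N. \<alpha> \<subseteq> g}) / real (card (perfect_matchings N))
    \<le> 1 / ((real N - 1) * (real N - 3))"
proof -
  obtain a b a' b' where ab: "\<alpha> = {(a, b), (a', b')}" "a < b" "a' < b'"
      "{a, b, a', b'} \<subseteq> {1..N}" "{a, b} \<inter> {a', b'} = {}"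
    using assms(1,4) by (auto elim: Gamma12_cases)
  have "(N - 1) * (N - 3) * card {g \<in> perfect_matchings N. \<alpha> \<subseteq> g} \<le> card (perfect_matchings N)"
    using card_matchings_two_pairs_le[of a b N a' b'] ab by simp
  then have "real (N - 1) * real (N - 3) * real (card {g \<in> perfect_matchings N. \<alpha> \<subseteq> g})
      \<le> real (card (perfect_matchings N))"
    by (metis of_nat_le_iff of_nat_mult)
  moreover have "real (N - 1) = real N - 1" "real (N - 3) = real N - 3" using assms(2) by (simp_all add: of_nat_diff)
  moreover have "card (perfect_matchings N) > 0"
    using finite_perfect_matchings perfect_matchings_nonempty[OF assms(3)] by (simp add: card_gt_0_iff)
  ultimately show ?thesis using assms(2) by (intro divide_le_one_divideI) simp_all
qed

lemma expectation_switching_le: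
  assumes "N = dsum d n" "even N" "N > 3" "\<alpha> \<in> Gamma1 n d"
  shows "measure_pmf.expectation (coupling_law N d n)
           (\<lambda>(g, B). Ind \<alpha> g
              * (\<Sum>\<beta>\<in>Gamma1 n d. \<bar>Ind \<beta> g - Jind N \<beta> \<alpha> (B \<alpha>) g\<bar>)
              * (\<Sum>\<gamma>\<in>Gamma1 n d. \<bar>Ind \<gamma> g - Jind N \<gamma> \<alpha> (B \<alpha>) g\<bar>))
     \<le> (if \<alpha> \<in> Gamma11 n d then 16 / (real N - 1) else 36 / ((real N - 1) * (real N - 3)))"
proof (cases "\<alpha> \<in> Gamma11 n d")
  case True
  have "16 * (real (card {g \<in> perfect_matchings N. \<alpha> \<subseteq> g}) / real (card (perfect_matchings N)))
      \<le> 16 * (1 / (real N - 1))"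
    using prob_Gamma11_le[OF assms(1) _ assms(2) True] assms(3) by (intro mult_left_mono) simp_all
  then show ?thesis using expectation_switching_le_prob[OF assms(2-4)] True by simp
next
  case False
  then have "\<alpha> \<in> Gamma12 n d" using assms(4) by (simp add: Gamma1_def)
  have "36 * (real (card {g \<in> perfect_matchings N. \<alpha> \<subseteq> g}) / real (card (perfect_matchings N)))
      \<le> 36 * (1 / ((real N - 1) * (real N - 3)))"
    using prob_Gamma12_le[OF assms(1,3,2) \<open>\<alpha> \<in> Gamma12 n d\<close>] by (intro mult_left_mono) simp_all
  then show ?thesis using expectation_switching_le_prob[OF assms(2-4)] False by simp
qed

section \<open>The sizes of \<open>\<Gamma>\<^sub>1\<^sub>1\<close> and \<open>\<Gamma>\<^sub>1\<^sub>2\<close>\<close>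

lemma card_ordered_pairs_le:
  fixes V :: "'a :: linorder set"
  assumes "finite V"
  shows "2 * card {(i, j) \<in> V \<times> V. i < j} \<le> card V ^ 2"
proof -
  let ?P = "{(i, j) \<in> V \<times> V. i < j}" and ?Q = "{(i, j) \<in> V \<times> V. j < i}"
  have "?Q = prod.swap ` ?P" by auto
  then have "card ?Q = card ?P" by (simp add: card_image)
  moreover have "card (?P \<union> ?Q) = card ?P + card ?Q"
    using assms by (intro card_Un_disjoint) (auto intro: finite_subset[of _ "V \<times> V"])
  moreover have "card (?P \<union> ?Q) \<le> card (V \<times> V)"
    using assms by (intro card_mono) auto
  ultimately show ?thesis by (simp add: card_cartesian_product power2_eq_square)
qed

definition vertices_of_degree :: "nat \<Rightarrow> (nat \<Rightarrow> nat) \<Rightarrow> nat \<Rightarrow> nat set" where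
  "vertices_of_degree n d k = {i \<in> {1..n}. d i = k}"

lemma card_vertices_of_degree: "card (vertices_of_degree n d k) = cnt n d k"
  by (simp add: vertices_of_degree_def cnt_def)

lemma finite_vertices_of_degree: "finite (vertices_of_degree n d k)"
  by (simp add: vertices_of_degree_def)

lemma two_card_Gamma11_le: "2 * card (Gamma11 n d) \<le> cnt n d 1 ^ 2"
proof -
  let ?V = "vertices_of_degree n d 1"
  let ?P = "{(i, j) \<in> ?V \<times> ?V. i < j}"
  have fin: "finite ?P"
    using finite_vertices_of_degree by (auto intro: finite_subset[of _ "?V \<times> ?V"])
  have "Gamma11 n d \<subseteq> (\<lambda>(i, j). {edge (dsum d i) (dsum d j)}) ` ?P"
  proof
    fix \<alpha> assume "\<alpha> \<in> Gamma11 n d"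
    then obtain s t i j where "\<alpha> = {edge s t}" "i \<in> {1..n}" "j \<in> {1..n}" "i < j" "d i = 1" "d j = 1"
        "s \<in> half_edges d i" "t \<in> half_edges d j"
      by (auto simp: Gamma11_def)
    then show "\<alpha> \<in> (\<lambda>(i, j). {edge (dsum d i) (dsum d j)}) ` ?P"
      by (intro image_eqI[of _ _ "(i, j)"]) (auto simp: half_edges_degree_1 vertices_of_degree_def)
  qed
  then have "card (Gamma11 n d) \<le> card ?P"
    using fin by (meson card_image_le card_mono finite_imageI le_trans)
  then show ?thesis
    using card_ordered_pairs_le[OF finite_vertices_of_degree, of n d 1]
    by (simp add: card_vertices_of_degree)
qed

lemma card_Gamma12_le: "card (Gamma12 n d) \<le> cnt n d 1 ^ 2 * cnt n d 2"
proof -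
  let ?V = "vertices_of_degree n d 1"
  let ?P = "{(i, j) \<in> ?V \<times> ?V. i < j}"
  let ?f = "\<lambda>((i, j), k, b). {edge (dsum d i) (if b then dsum d k - 1 else dsum d k),
      edge (dsum d j) (if b then dsum d k else dsum d k - 1)}"
  have "finite ?P"
    using finite_vertices_of_degree by (auto intro: finite_subset[of _ "?V \<times> ?V"])
  then have fin: "finite (?P \<times> vertices_of_degree n d 2 \<times> (UNIV :: bool set))"
    by (simp add: finite_vertices_of_degree)
  have "Gamma12 n d \<subseteq> ?f ` (?P \<times> vertices_of_degree n d 2 \<times> UNIV)"
  proof
    fix \<alpha> assume "\<alpha> \<in> Gamma12 n d"
    then obtain s t u v i j k where st: "\<alpha> = {edge s u, edge t v}" "i \<in> {1..n}" "j \<in> {1..n}"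
        "k \<in> {1..n}" "i < j" "d i = 1" "d j = 1" "d k = 2"
        "s \<in> half_edges d i" "t \<in> half_edges d j" "u \<in> half_edges d k" "v \<in> half_edges d k" "u \<noteq> v"
      by (auto simp: Gamma12_def)
    then have "s = dsum d i" "t = dsum d j"
      "(u = dsum d k - 1 \<and> v = dsum d k) \<or> (u = dsum d k \<and> v = dsum d k - 1)"
      using half_edges_degree_1[of i d] half_edges_degree_1[of j d] half_edges_degree_2[of k d] by auto
    then show "\<alpha> \<in> ?f ` (?P \<times> vertices_of_degree n d 2 \<times> UNIV)"
      using st by (intro image_eqI[of _ _ "((i, j), k, u = dsum d k - 1)"])
        (auto simp: vertices_of_degree_def)
  qed
  then have "card (Gamma12 n d) \<le> card (?P \<times> vertices_of_degree n d 2 \<times> (UNIV :: bool set))"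
    using fin by (meson card_image_le card_mono finite_imageI le_trans)
  also have "\<dots> = card ?P * cnt n d 2 * 2"
    by (simp add: card_cartesian_product card_vertices_of_degree)
  also have "\<dots> \<le> cnt n d 1 ^ 2 * cnt n d 2"
    using card_ordered_pairs_le[OF finite_vertices_of_degree, of n d 1]
    by (simp add: card_vertices_of_degree)
  finally show ?thesis .
qed

lemma switching_bound_arith:
  fixes N c x y C11 C12 :: real
  assumes N: "N > 3" and xy: "0 \<le> x" "0 \<le> y" and c: "max x y / (N - 3) \<le> c"
    and C11: "0 \<le> C11" "2 * C11 \<le> x\<^sup>2" and C12: "0 \<le> C12" "C12 \<le> x\<^sup>2 * y"
  shows "C11 * (16 / (N - 1)) + C12 * (36 / ((N - 1) * (N - 3))) \<le> (8 * c + 36 * c\<^sup>2) * max x y"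
proof -
  define m where "m = max x y"
  define r where "r = m / (N - 3)"
  have m: "0 \<le> m" "x \<le> m" "y \<le> m" using xy by (auto simp: m_def)
  then have m2: "x\<^sup>2 \<le> m\<^sup>2" using xy(1) by (simp add: power_mono)
  then have m3: "x\<^sup>2 * y \<le> m ^ 3"
    using m xy(2) by (simp add: power3_eq_cube power2_eq_square mult_mono)
  have r: "0 \<le> r" "r \<le> c" using m(1) N c by (simp_all add: r_def m_def)
  have "C11 * (16 / (N - 1)) \<le> C11 * (16 / (N - 3))"
    using N C11 by (intro mult_left_mono divide_left_mono) simp_all
  also have "\<dots> \<le> 8 * x\<^sup>2 / (N - 3)"
    using N C11 by (simp add: divide_right_mono)
  also have "\<dots> \<le> 8 * m\<^sup>2 / (N - 3)"
    using N m2 by (simp add: divide_right_mono)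
  also have "\<dots> = 8 * m * r" by (simp add: r_def power2_eq_square)
  also have "\<dots> \<le> 8 * m * c" using r m(1) by (simp add: mult_left_mono)
  finally have first: "C11 * (16 / (N - 1)) \<le> 8 * c * m" by (simp only: mult_ac)
  have "C12 * (36 / ((N - 1) * (N - 3))) \<le> C12 * (36 / (N - 3)\<^sup>2)"
    using N C12 by (intro mult_left_mono divide_left_mono) (simp_all add: power2_eq_square)
  also have "\<dots> \<le> 36 * (x\<^sup>2 * y) / (N - 3)\<^sup>2"
    using C12 by (simp add: divide_right_mono)
  also have "\<dots> \<le> 36 * m ^ 3 / (N - 3)\<^sup>2"
    using m3 by (simp add: divide_right_mono)
  also have "\<dots> = 36 * m * r\<^sup>2" by (simp add: r_def power2_eq_square power3_eq_cube)
  also have "\<dots> \<le> 36 * m * c\<^sup>2" using r m(1) by (simp add: mult_left_mono power_mono)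
  finally have second: "C12 * (36 / ((N - 1) * (N - 3))) \<le> 36 * c\<^sup>2 * m" by (simp only: mult_ac)
  show ?thesis using first second by (simp add: m_def algebra_simps)
qed

lemma sum_expectation_switching_le:
  assumes "N = dsum d n" "even N" "N > 3"
  shows "(\<Sum>\<alpha>\<in>Gamma1 n d. measure_pmf.expectation (coupling_law N d n)
           (\<lambda>(g, B). Ind \<alpha> g
              * (\<Sum>\<beta>\<in>Gamma1 n d. \<bar>Ind \<beta> g - Jind N \<beta> \<alpha> (B \<alpha>) g\<bar>)
              * (\<Sum>\<gamma>\<in>Gamma1 n d. \<bar>Ind \<gamma> g - Jind N \<gamma> \<alpha> (B \<alpha>) g\<bar>)))
    \<le> real (card (Gamma11 n d)) * (16 / (real N - 1))
      + real (card (Gamma12 n d)) * (36 / ((real N - 1) * (real N - 3)))"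
proof -
  define E where "E \<alpha> = measure_pmf.expectation (coupling_law N d n)
           (\<lambda>(g, B). Ind \<alpha> g
              * (\<Sum>\<beta>\<in>Gamma1 n d. \<bar>Ind \<beta> g - Jind N \<beta> \<alpha> (B \<alpha>) g\<bar>)
              * (\<Sum>\<gamma>\<in>Gamma1 n d. \<bar>Ind \<gamma> g - Jind N \<gamma> \<alpha> (B \<alpha>) g\<bar>))" for \<alpha>
  have "(\<Sum>\<alpha>\<in>Gamma1 n d. E \<alpha>) = (\<Sum>\<alpha>\<in>Gamma11 n d. E \<alpha>) + (\<Sum>\<alpha>\<in>Gamma12 n d. E \<alpha>)"
    using finite_Gamma1[of n d] Gamma11_Gamma12_disjoint[of n d]
    unfolding Gamma1_def by (intro sum.union_disjoint) auto
  also have "\<dots> \<le> real (card (Gamma11 n d)) * (16 / (real N - 1))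
      + real (card (Gamma12 n d)) * (36 / ((real N - 1) * (real N - 3)))"
  proof (intro add_mono sum_bounded_above)
    fix \<alpha> assume "\<alpha> \<in> Gamma11 n d"
    then have "\<alpha> \<in> Gamma1 n d" by (simp add: Gamma1_def)
    from expectation_switching_le[OF assms this] \<open>\<alpha> \<in> Gamma11 n d\<close>
    show "E \<alpha> \<le> 16 / (real N - 1)" by (simp add: E_def)
  next
    fix \<alpha> assume "\<alpha> \<in> Gamma12 n d"
    then have "\<alpha> \<in> Gamma1 n d" "\<alpha> \<notin> Gamma11 n d"
      using Gamma11_Gamma12_disjoint by (auto simp: Gamma1_def)
    from expectation_switching_le[OF assms this(1)] this(2)
    show "E \<alpha> \<le> 36 / ((real N - 1) * (real N - 3))" by (simp add: E_def)
  qed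
  finally show ?thesis unfolding E_def .
qed

theorem proposition4p9:
  fixes n :: nat and d :: "nat \<Rightarrow> nat" and N :: nat and c :: real
  assumes "N = (\<Sum>i=1..n. d i)"
    and "even N"
    and "N > 3"
    and "real (max (cnt n d 1) (cnt n d 2)) / real (N - 3) \<le> c"
  shows "(\<Sum>alpha\<in>Gamma1 n d. measure_pmf.expectation (coupling_law N d n)
           (\<lambda>(g, B). Ind alpha g
              * (\<Sum>beta\<in>Gamma1 n d. \<bar>Ind beta g - Jind N beta alpha (B alpha) g\<bar>)
              * (\<Sum>gamma\<in>Gamma1 n d. \<bar>Ind gamma g - Jind N gamma alpha (B alpha) g\<bar>)))
         \<le> (8 * c + 36 * c ^ 2) * real (max (cnt n d 1) (cnt n d 2))"
proof -
  have "N = dsum d n" using assms(1) by (simp add: dsum_def)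
  note sum_expectation_switching_le[OF this assms(2,3)]
  also have "real (card (Gamma11 n d)) * (16 / (real N - 1))
      + real (card (Gamma12 n d)) * (36 / ((real N - 1) * (real N - 3)))
    \<le> (8 * c + 36 * c ^ 2) * max (real (cnt n d 1)) (real (cnt n d 2))"
  proof (rule switching_bound_arith)
    show "2 * real (card (Gamma11 n d)) \<le> (real (cnt n d 1))\<^sup>2"
      using two_card_Gamma11_le[of n d] by (metis of_nat_le_iff of_nat_mult of_nat_numeral of_nat_power)
    show "real (card (Gamma12 n d)) \<le> (real (cnt n d 1))\<^sup>2 * real (cnt n d 2)"
      using card_Gamma12_le[of n d] by (metis of_nat_le_iff of_nat_mult of_nat_power)
    show "max (real (cnt n d 1)) (real (cnt n d 2)) / (real N - 3) \<le> c"
      using assms(3,4) by (simp add: of_nat_diff of_nat_max)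
  qed (use assms(3) in auto)
  finally show ?thesis by (simp add: of_nat_max)
qed

end
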